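(* Let $A\in\mathrm{GL}(n,2)$ have columns $\mathbf{a}_1,\dots,\mathbf{a}_n$, and let $\rho$ be an $n$-qubit density matrix. Define $$F_{\max}(A;\rho):=\max\{\,p(\mathbf{0}) : p\in\Delta(\mathbb{F}_2^n),\ \widehat p(\mathbf{a}_i)=\mu_\rho(\mathbf{a}_i)\ \forall i\in\{1,\dots,n\}\,\}.$$ Then $$F_{\max}(A;\rho)=\frac12+\frac12\min_{i\in\{1,\dots,n\}}\mu_\rho(\mathbf{a}_i).$$
   Context: Setting: $|\psi\rangle$ is an $n$-qubit stabilizer state whose stabilizer group is generated by independent commuting Pauli operators $g_1,\dots,g_n$. For $\mathbf{u}\in\mathbb{F}_2^n$ put $g(\mathbf{u})=\prod_j g_j^{u_j}$. For $\mathbf{s}\in\mathbb{F}_2^n$, the syndrome projectors $\Pi_{\mathbf{s}}=2^{-n}\prod_{j=1}^n(I+(-1)^{s_j}g_j)$ are mutually orthogonal rank-one projectors summing to the identity, with $\Pi_{\mathbf{0}}=|\psi\rangle\langle\psi|$. For a state $\rho$, its syndrome distribution is $p_\rho(\mathbf{s})=\mathrm{tr}(\rho\Pi_{\mathbf{s}})$ and $\mu_\rho(\mathbf{u}):=\mathrm{tr}(\rho\, g(\mathbf{u}))=\widehat{p_\rho}(\mathbf{u})$, where for $p\in\Delta(\mathbb{F}_2^n)$ (probability distributions on $\mathbb{F}_2^n$) the Walsh transform is $\widehat p(\mathbf{u})=\sum_{\mathbf{s}}(-1)^{\mathbf{u}\cdot\mathbf{s}}p(\mathbf{s})$ with $\mathbf{u}\cdot\mathbf{s}$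 the mod-2 inner product. $\mathrm{GL}(n,2)$ is the group of invertible binary $n\times n$ matrices (a "gauge"); querying gauge $A$ yields the exact values $\mu_\rho(\mathbf{a}_1),\dots,\mu_\rho(\mathbf{a}_n)$. *)

theory Defs
  imports Complex_Main
begin

text \<open>Vectors of F_2^n are modelled as subsets of a finite index type 'n (n = CARD('n)):
  a vector u corresponds to its support. Addition is symmetric difference and the mod-2
  inner product u.s is the parity of card (u Int s).\<close>

definition dot2 :: "'n::finite set \<Rightarrow> 'n set \<Rightarrow> bool" where
  "dot2 u s = odd (card (u \<inter> s))"

definition is_dist :: "('n::finite set \<Rightarrow> real) \<Rightarrow> bool" where
  "is_dist p \<longleftrightarrow> (\<forall>s. 0 \<le> p s) \<and> (\<Sum>s\<in>UNIV. p s) = 1"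

definition walsh :: "('n::finite set \<Rightarrow> real) \<Rightarrow> 'n set \<Rightarrow> real" where
  "walsh p u = (\<Sum>s\<in>UNIV. (if dot2 u s then -1 else 1) * p s)"

text \<open>A binary n x n matrix is given by its columns a i (column i has support a i);
  A x = sum_{i in x} a i (mod 2), i.e. entry (j,i) of A is 1 iff j is in a i.\<close>
definition mat_vec2 :: "('n::finite \<Rightarrow> 'n set) \<Rightarrow> 'n set \<Rightarrow> 'n set" where
  "mat_vec2 a x = {j. odd (card {i\<in>x. j \<in> a i})}"

definition in_GL2 :: "('n::finite \<Rightarrow> 'n set) \<Rightarrow> bool" where
  "in_GL2 a \<longleftrightarrow> bij (mat_vec2 a)"

definition Fmax_set :: "('n::finite \<Rightarrow> 'n set) \<Rightarrow> ('n set \<Rightarrow> real) \<Rightarrow> real set" where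
  "Fmax_set a \<mu> = {p {} | p. is_dist p \<and> (\<forall>i. walsh p (a i) = \<mu> (a i))}"

definition is_max :: "real set \<Rightarrow> real \<Rightarrow> bool" where
  "is_max S m \<longleftrightarrow> m \<in> S \<and> (\<forall>x\<in>S. x \<le> m)"

end

theory Submission
  imports Defs
begin

text \<open>Every distribution p satisfies p(0) \<le> (1 + hat p(u)) / 2, because hat p(u) is at least
  p(0) - (1 - p(0)); this is the upper bound. For attainment, the transpose map
  s \<mapsto> (a_i \<cdot> s)_i is a bijection of F_2^n (A is invertible) that turns the constraints
  hat p(a_i) = \<mu>_i into prescribed marginals P(i \<in> Y) = (1 - \<mu>_i) / 2 of a random set Y of
  indices. The comonotone coupling, in which Y is supported on a chain and is empty with
  probability 1 - max_i P(i \<in> Y), realises these marginals with the largest possible mass at 0.\<close>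

definition marginal :: "('n::finite set \<Rightarrow> real) \<Rightarrow> 'n \<Rightarrow> real" where
  "marginal p i = (\<Sum>Y | i \<in> Y. p Y)"

lemma marginal_eq_sum_if: "marginal p i = (\<Sum>Y\<in>UNIV. if i \<in> Y then p Y else 0)"
  by (simp add: marginal_def sum.If_cases)

definition transpose_vec2 :: "('n::finite \<Rightarrow> 'n set) \<Rightarrow> 'n set \<Rightarrow> 'n set" where
  "transpose_vec2 a s = {i. dot2 (a i) s}"

definition flip :: "'a \<Rightarrow> 'a set \<Rightarrow> 'a set" where
  "flip x Y = (if x \<in> Y then Y - {x} else insert x Y)"

lemma dot2_empty_right [simp]: "\<not> dot2 u {}"
  by (simp add: dot2_def)

lemma dot2_singleton_left: "dot2 {j} s \<longleftrightarrow> j \<in> s"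
  by (cases "j \<in> s") (simp_all add: dot2_def)

lemma dot2_mat_vec2: "dot2 (mat_vec2 a x) s \<longleftrightarrow> dot2 x (transpose_vec2 a s)"
proof -
  have "mat_vec2 a x \<inter> s = {j\<in>s. odd (card {i\<in>x. j \<in> a i})}"
    unfolding mat_vec2_def by auto
  then have "even (card (mat_vec2 a x \<inter> s)) \<longleftrightarrow> even (\<Sum>j\<in>s. card {i\<in>x. j \<in> a i})"
    by (simp add: even_sum_iff)
  also have "(\<Sum>j\<in>s. card {i\<in>x. j \<in> a i}) = (\<Sum>j\<in>s. \<Sum>i\<in>x. if j \<in> a i then 1 else (0::nat))"
    by (simp add: sum.If_cases) (intro sum.cong refl arg_cong[where f=card]; auto)
  also have "\<dots> = (\<Sum>i\<in>x. \<Sum>j\<in>s. if j \<in> a i then 1 else (0::nat))"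
    by (rule sum.swap)
  also have "\<dots> = (\<Sum>i\<in>x. card (a i \<inter> s))"
    by (rule sum.cong) (auto simp: sum.If_cases Int_commute)
  also have "even \<dots> \<longleftrightarrow> even (card (x \<inter> transpose_vec2 a s))"
    by (simp add: even_sum_iff dot2_def transpose_vec2_def Int_def)
  finally show ?thesis
    by (simp add: dot2_def)
qed

lemma bij_transpose_vec2:
  assumes "in_GL2 a"
  shows "bij (transpose_vec2 a)"
proof -
  have "s = t" if "transpose_vec2 a s = transpose_vec2 a t" for s t
  proof -
    have "dot2 (mat_vec2 a x) s \<longleftrightarrow> dot2 (mat_vec2 a x) t" for x
      by (simp add: dot2_mat_vec2 that)
    moreover have "surj (mat_vec2 a)"
      using assms by (simp add: in_GL2_def bij_def)
    ultimately have "dot2 {j} s \<longleftrightarrow> dot2 {j} t" for j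
      by (metis surjD)
    then show "s = t"
      by (auto simp: dot2_singleton_left)
  qed
  then have "inj (transpose_vec2 a)"
    by (rule injI)
  then show ?thesis
    by (simp add: bij_def finite_UNIV_inj_surj)
qed

lemma is_dist_comp_bij:
  assumes "bij T" and "is_dist p"
  shows "is_dist (p \<circ> T)"
  using assms sum.reindex_bij_betw[of T UNIV UNIV p] by (simp add: is_dist_def bij_betw_def)

lemma walsh_comp_transpose_vec2:
  assumes "in_GL2 a" and "is_dist p"
  shows "walsh (p \<circ> transpose_vec2 a) (a i) = 1 - 2 * marginal p i"
proof -
  have "walsh (p \<circ> transpose_vec2 a) (a i)
      = (\<Sum>s\<in>UNIV. (\<lambda>Y. (if i \<in> Y then -1 else 1) * p Y) (transpose_vec2 a s))"
    by (simp add: walsh_def transpose_vec2_def)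
  also have "\<dots> = (\<Sum>Y\<in>UNIV. (if i \<in> Y then -1 else 1) * p Y)"
    using bij_transpose_vec2[OF assms(1)] by (rule sum.reindex_bij_betw)
  also have "\<dots> = (\<Sum>Y\<in>UNIV. p Y - 2 * (if i \<in> Y then p Y else 0))"
    by (rule sum.cong) auto
  also have "\<dots> = 1 - 2 * marginal p i"
    using assms(2)
    by (simp add: is_dist_def marginal_eq_sum_if sum_subtractf sum_distrib_left[symmetric])
  finally show ?thesis .
qed

lemma abs_walsh_le_1:
  assumes "is_dist p"
  shows "\<bar>walsh p u\<bar> \<le> 1"
proof -
  have "\<bar>walsh p u\<bar> \<le> (\<Sum>s\<in>UNIV. \<bar>(if dot2 u s then -1 else 1) * p s\<bar>)"
    unfolding walsh_def by (rule sum_abs)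
  also have "\<dots> = (\<Sum>s\<in>UNIV. p s)"
    using assms by (intro sum.cong) (auto simp: is_dist_def)
  also have "\<dots> = 1"
    using assms by (simp add: is_dist_def)
  finally show ?thesis .
qed

lemma two_dist_empty_le_walsh:
  assumes "is_dist p"
  shows "2 * p {} \<le> 1 + walsh p u"
proof -
  have "1 + walsh p u = (\<Sum>s\<in>UNIV. p s + (if dot2 u s then -1 else 1) * p s)"
    using assms by (simp add: is_dist_def walsh_def sum.distrib)
  also have "\<dots> = (\<Sum>s\<in>UNIV. (if dot2 u s then 0 else 2) * p s)"
    by (rule sum.cong) auto
  also have "\<dots> \<ge> (\<Sum>s\<in>{{}}. (if dot2 u s then 0 else 2) * p s)"
    using assms unfolding is_dist_def by (intro sum_mono2) auto
  finally show ?thesis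
    by simp
qed

lemma flip_flip [simp]: "flip x (flip x Y) = Y"
  by (auto simp: flip_def)

lemma mem_flip_iff: "i \<in> flip x Y \<longleftrightarrow> (i = x \<longleftrightarrow> i \<notin> Y)"
  by (auto simp: flip_def)

lemma sum_comp_flip:
  fixes g :: "'n::finite set \<Rightarrow> 'b::comm_monoid_add"
  shows "(\<Sum>Y\<in>UNIV. g (flip x Y)) = (\<Sum>Y\<in>UNIV. g Y)"
  by (rule sum.reindex_bij_witness[where i="flip x" and j="flip x"]) auto

text \<open>Since p lives on sets avoiding x, p \<circ> flip x is its pushforward under Y \<mapsto> insert x Y;
  then mass 1 - c is moved from {x} to {}.\<close>

definition extend_dist :: "'a \<Rightarrow> real \<Rightarrow> ('a set \<Rightarrow> real) \<Rightarrow> 'a set \<Rightarrow> real" where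
  "extend_dist x c p Y =
     p (flip x Y) + (if Y = {} then 1 - c else 0) - (if Y = {x} then 1 - c else 0)"

lemma extend_dist_props:
  fixes p :: "'n::finite set \<Rightarrow> real"
  assumes p: "is_dist p" and supp: "\<forall>Y. p Y \<noteq> 0 \<longrightarrow> Y \<subseteq> S" and "x \<notin> S"
    and c: "1 - p {} \<le> c" "c \<le> 1"
  shows "is_dist (extend_dist x c p)"
    and "\<forall>Y. extend_dist x c p Y \<noteq> 0 \<longrightarrow> Y \<subseteq> insert x S"
    and "marginal (extend_dist x c p) x = c"
    and "i \<noteq> x \<Longrightarrow> marginal (extend_dist x c p) i = marginal p i"
    and "extend_dist x c p {} = 1 - c"
proof -
  have p_x: "p Y = 0" if "x \<in> Y" for Y
    using supp \<open>x \<notin> S\<close> that by blast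
  have "0 \<le> extend_dist x c p Y" for Y
    using p c p_x[of "{x}"] by (auto simp: extend_dist_def is_dist_def flip_def)
  moreover have "(\<Sum>Y\<in>UNIV. extend_dist x c p Y) = 1"
    using p by (simp add: extend_dist_def is_dist_def sum.distrib sum_subtractf sum_comp_flip)
  ultimately show "is_dist (extend_dist x c p)"
    by (simp add: is_dist_def)
  show "\<forall>Y. extend_dist x c p Y \<noteq> 0 \<longrightarrow> Y \<subseteq> insert x S"
  proof (intro allI impI)
    fix Y
    assume "extend_dist x c p Y \<noteq> 0"
    have "p (flip x Y) \<noteq> 0 \<or> Y \<subseteq> {x}"
      using \<open>extend_dist x c p Y \<noteq> 0\<close> by (auto simp: extend_dist_def split: if_splits)
    then show "Y \<subseteq> insert x S"
      using supp by (auto simp: flip_def split: if_splits)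
  qed
  have "marginal (extend_dist x c p) x
      = (\<Sum>Y\<in>UNIV. (if x \<in> Y then p (flip x Y) else 0) - (if Y = {x} then 1 - c else 0))"
    unfolding marginal_eq_sum_if extend_dist_def by (rule sum.cong) auto
  also have "\<dots> = (\<Sum>Y\<in>UNIV. (if x \<in> Y then p (flip x Y) else 0)) - (1 - c)"
    by (simp add: sum_subtractf)
  also have "(\<Sum>Y\<in>UNIV. (if x \<in> Y then p (flip x Y) else 0))
      = (\<Sum>Y\<in>UNIV. (if x \<notin> flip x Y then p (flip x Y) else 0))"
    by (simp add: mem_flip_iff)
  also have "\<dots> = (\<Sum>Y\<in>UNIV. (if x \<notin> Y then p Y else 0))"
    by (rule sum_comp_flip)
  also have "\<dots> = (\<Sum>Y\<in>UNIV. p Y)"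
    by (rule sum.cong) (auto simp: p_x)
  also have "\<dots> = 1"
    using p by (simp add: is_dist_def)
  finally show "marginal (extend_dist x c p) x = c"
    by simp
  show "marginal (extend_dist x c p) i = marginal p i" if "i \<noteq> x"
  proof -
    have "marginal (extend_dist x c p) i = (\<Sum>Y\<in>UNIV. if i \<in> flip x Y then p (flip x Y) else 0)"
      unfolding marginal_eq_sum_if extend_dist_def using that
      by (intro sum.cong) (auto simp: mem_flip_iff)
    also have "\<dots> = marginal p i"
      by (simp add: marginal_eq_sum_if sum_comp_flip[where g = "\<lambda>Y. if i \<in> Y then p Y else 0"])
    finally show ?thesis .
  qed
  show "extend_dist x c p {} = 1 - c"
    using p_x[of "{x}"] by (simp add: extend_dist_def flip_def)
qed

lemma comonotone_coupling:
  fixes r :: "'n::finite \<Rightarrow> real"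
  assumes "\<And>i. i \<in> I \<Longrightarrow> 0 \<le> r i \<and> r i \<le> 1"
  shows "\<exists>p. is_dist p \<and> (\<forall>Y. p Y \<noteq> 0 \<longrightarrow> Y \<subseteq> I) \<and> (\<forall>i\<in>I. marginal p i = r i)
    \<and> p {} = 1 - Max (insert 0 (r ` I))"
  using finite [of I] assms
proof (induction I rule: finite_ranking_induct[where f = r])
  case empty
  show ?case
    by (rule exI[where x = "\<lambda>Y. if Y = {} then 1 else 0"]) (simp add: is_dist_def)
next
  case (insert x S)
  show ?case
  proof (cases "x \<in> S")
    case True
    then show ?thesis
      using insert by (simp add: insert_absorb)
  next
    case False
    from insert obtain p where p: "is_dist p" and supp: "\<forall>Y. p Y \<noteq> 0 \<longrightarrow> Y \<subseteq> S"
      and marg: "\<forall>i\<in>S. marginal p i = r i" and p_empty: "p {} = 1 - Max (insert 0 (r ` S))"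
      by auto
    have "0 \<le> r x" and "r x \<le> 1"
      using insert.prems by auto
    have "Max (insert 0 (r ` S)) \<le> r x"
      using insert \<open>0 \<le> r x\<close> by (intro Max.boundedI) auto
    then have mass: "1 - p {} \<le> r x"
      using p_empty by simp
    note q = extend_dist_props[OF p supp False mass \<open>r x \<le> 1\<close>]
    have "\<forall>i\<in>insert x S. marginal (extend_dist x (r x) p) i = r i"
      using q(3,4) marg False by fastforce
    moreover have "Max (insert 0 (r ` insert x S)) = r x"
      using insert \<open>0 \<le> r x\<close> by (intro Max_eqI) auto
    ultimately show ?thesis
      using q(1,2,5) by (intro exI[of _ "extend_dist x (r x) p"]) simp
  qed
qed

lemma Fmax_set_le:
  assumes "t \<in> Fmax_set a \<mu>"
  shows "t \<le> 1/2 + 1/2 * Min (range (\<lambda>i. \<mu> (a i)))"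
proof -
  obtain p where "t = p {}" and "is_dist p" and "\<forall>i. walsh p (a i) = \<mu> (a i)"
    using assms by (auto simp: Fmax_set_def)
  then have "2 * t - 1 \<le> \<mu> (a i)" for i
    using two_dist_empty_le_walsh[of p "a i"] by simp
  then have "2 * t - 1 \<le> Min (range (\<lambda>i. \<mu> (a i)))"
    by (intro Min.boundedI) auto
  then show ?thesis
    by linarith
qed

lemma Fmax_set_attained:
  assumes "in_GL2 a" and "\<And>i. \<bar>\<mu> (a i)\<bar> \<le> 1"
  shows "1/2 + 1/2 * Min (range (\<lambda>i. \<mu> (a i))) \<in> Fmax_set a \<mu>"
proof -
  define r where "r i = (1 - \<mu> (a i)) / 2" for i
  have "Min (range (\<lambda>i. \<mu> (a i))) \<in> range (\<lambda>i. \<mu> (a i))"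
    by (rule Min_in) simp_all
  then obtain k where k: "Min (range (\<lambda>i. \<mu> (a i))) = \<mu> (a k)"
    by blast
  have k_min: "\<mu> (a k) \<le> \<mu> (a i)" for i
    unfolding k[symmetric] by (rule Min_le) auto
  have "0 \<le> r i \<and> r i \<le> 1" for i
    using assms(2)[of i] by (auto simp: r_def)
  then obtain py where py: "is_dist py" and marg: "\<forall>i. marginal py i = r i"
    and py_empty: "py {} = 1 - Max (insert 0 (range r))"
    using comonotone_coupling[of UNIV r] by auto
  have "Max (insert 0 (range r)) = r k"
    using k_min \<open>0 \<le> r k \<and> r k \<le> 1\<close> by (intro Max_eqI) (auto simp: r_def)
  define p where "p = py \<circ> transpose_vec2 a"
  have "is_dist p"
    unfolding p_def using bij_transpose_vec2[OF assms(1)] py by (rule is_dist_comp_bij)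
  moreover have "walsh p (a i) = \<mu> (a i)" for i
    using walsh_comp_transpose_vec2[OF assms(1) py] marg by (simp add: p_def r_def field_simps)
  moreover have "p {} = 1/2 + 1/2 * Min (range (\<lambda>i. \<mu> (a i)))"
    using py_empty \<open>Max (insert 0 (range r)) = r k\<close> k
    by (simp add: p_def transpose_vec2_def r_def)
  ultimately show ?thesis
    unfolding Fmax_set_def mem_Collect_eq by (intro exI[of _ p]) simp
qed

theorem proposition2:
  fixes a :: "'n::finite \<Rightarrow> 'n set"
    and q :: "'n set \<Rightarrow> real"
  assumes "in_GL2 a"
    and "is_dist q"
  shows "is_max (Fmax_set a (walsh q))
           (1/2 + 1/2 * Min ((\<lambda>i. walsh q (a i)) ` UNIV))"
  using Fmax_set_attained[OF assms(1) abs_walsh_le_1[OF assms(2)]] Fmax_set_le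
  by (auto simp: is_max_def)

end
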